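(* Let $r=2$ and $m=2n$. Let the utilities $u_i(j)$ ($i\in[n]$, $j\in[m]$) be drawn independently from a distribution $\mathcal{U}$ on $[0,1]$ that is $(\underline{\theta},q)$-polynomially bounded below at 1 and $(\overline{\theta},q)$-polynomially bounded above at 1, for constants $\underline{\theta},\overline{\theta},q>0$, and let $\tau:=1-\left(\frac{64\log m}{\underline{\theta}n}\right)^{1/q}$. Let $E_{\geq\tau}=\{(i,j): u_i(j)\geq\tau\}$ and let $E^*_{\geq\tau}$ be the edge set produced by ThresholdMatchingWithRemoval$_\tau$ (see context). Then, with high probability, the bipartite graph $(N,M,E_{\geq\tau}\setminus E^*_{\geq\tau})$ has maximum degree at most 2.
   Context: Agents are $N=[n]$, items $M=[m]$. A distribution $\mathcal{U}$ on $[0,1]$ is $(\theta,q)$-polynomially bounded below (resp. above) at 1 if for all $\alpha\in(0,1]$, $\Pr_{u\sim\mathcal{U}}[u>1-\alpha]\geq\theta\alpha^q$ (resp. $\leq\theta\alpha^q$). For a finite multiset $S$ of reals, sum-top$_r(S)$ is the sum of its $r$ largest elements (or of all elements if $|S|<r$). Procedure ThresholdMatchingWithRemoval$_\tau$: for each agent $i=1,\dots,n$, set $M^*_{\geq\tau}(i)\leftarrow\{j\in M: u_i(j)\geq\tau\}$; then for each $i'\in N\setminus\{i\}$ in turn, while sum-top$_r(\{u_{i'}(j): j\in M^*_{\geq\tau}(i)\})>r\tau$ (as a multiset), remove from $M^*_{\geq\tau}(i)$ the item(s) $j\in M^*_{\geq\tau}(i)$ maximizing $u_{i'}(j)$. Then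 $E^*_{\geq\tau}=\{(i,j): j\in M^*_{\geq\tau}(i)\text{ at the end}\}$. $\log$ is natural. "With high probability" means with probability tending to 1 as $n\to\infty$. *)

theory Defs
  imports "HOL-Probability.Probability"
begin

text \<open>Agents are 0..n-1 (paper: 1..n, same order), items 0..m-1.\<close>

definition sum_top :: "nat \<Rightarrow> real multiset \<Rightarrow> real" where
  "sum_top r S = sum_list (take r (rev (sorted_list_of_multiset S)))"

definition poly_bounded_below :: "real measure \<Rightarrow> real \<Rightarrow> real \<Rightarrow> bool" where
  "poly_bounded_below U \<theta> q \<longleftrightarrow>
     (\<forall>\<alpha>\<in>{0<..1}. measure U {x. x > 1 - \<alpha>} \<ge> \<theta> * \<alpha> powr q)"

definition poly_bounded_above :: "real measure \<Rightarrow> real \<Rightarrow> real \<Rightarrow> bool" where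
  "poly_bounded_above U \<theta> q \<longleftrightarrow>
     (\<forall>\<alpha>\<in>{0<..1}. measure U {x. x > 1 - \<alpha>} \<le> \<theta> * \<alpha> powr q)"

text \<open>The inner while loop for a fixed other agent with utility function v:
  while sum-top_r of the multiset of v-values on S exceeds r*tau, remove all
  maximisers of v on S.  The fuel (card S) suffices, since each iteration
  removes at least one item; on the empty set the loop stops.\<close>
fun shrink :: "nat \<Rightarrow> (nat \<Rightarrow> real) \<Rightarrow> nat \<Rightarrow> real \<Rightarrow> nat set \<Rightarrow> nat set" where
  "shrink 0 v r \<tau> S = S"
| "shrink (Suc k) v r \<tau> S =
     (if S \<noteq> {} \<and> sum_top r (image_mset v (mset_set S)) > real r * \<tau>
      then shrink k v r \<tau> (S - {j\<in>S. v j = Max (v ` S)})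
      else S)"

definition Mstar :: "nat \<Rightarrow> nat \<Rightarrow> (nat \<Rightarrow> nat \<Rightarrow> real) \<Rightarrow> nat \<Rightarrow> real \<Rightarrow> nat \<Rightarrow> nat set" where
  "Mstar n m u r \<tau> i =
     foldl (\<lambda>S i'. if i' = i then S else shrink (card S) (u i') r \<tau> S)
           {j. j < m \<and> u i j \<ge> \<tau>} [0..<n]"

definition Estar :: "nat \<Rightarrow> nat \<Rightarrow> (nat \<Rightarrow> nat \<Rightarrow> real) \<Rightarrow> nat \<Rightarrow> real \<Rightarrow> (nat \<times> nat) set" where
  "Estar n m u r \<tau> = {(i, j). i < n \<and> j \<in> Mstar n m u r \<tau> i}"

definition Ethr :: "nat \<Rightarrow> nat \<Rightarrow> (nat \<Rightarrow> nat \<Rightarrow> real) \<Rightarrow> real \<Rightarrow> (nat \<times> nat) set" where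
  "Ethr n m u \<tau> = {(i, j). i < n \<and> j < m \<and> u i j \<ge> \<tau>}"

definition max_degree_le :: "nat \<Rightarrow> nat \<Rightarrow> (nat \<times> nat) set \<Rightarrow> nat \<Rightarrow> bool" where
  "max_degree_le n m E d \<longleftrightarrow>
     (\<forall>i<n. card {j. j < m \<and> (i, j) \<in> E} \<le> d) \<and>
     (\<forall>j<m. card {i. i < n \<and> (i, j) \<in> E} \<le> d)"

definition tau :: "real \<Rightarrow> real \<Rightarrow> nat \<Rightarrow> nat \<Rightarrow> real" where
  "tau \<theta> q n m = 1 - (64 * ln (real m) / (\<theta> * real n)) powr (1 / q)"

end

theory Submission
  imports Defs "HOL-Real_Asymp.Real_Asymp"
begin

text \<open>An edge \<open>(i, j)\<close> with \<open>u\<^sub>i(j) \<ge> \<tau>\<close> is removed only when, for some other agent \<open>i'\<close>,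
  the two largest \<open>i'\<close>-utilities on the remaining candidate items of \<open>i\<close> sum to more than \<open>2\<tau>\<close>
  and \<open>j\<close> maximises \<open>u\<^sub>i\<^sub>'\<close>. Utilities are at most 1, so \<open>j\<close> and a second candidate \<open>j'\<close>
  have \<open>i'\<close>-utility above \<open>2\<tau> - 1\<close>, and both have \<open>i\<close>-utility \<open>\<ge> \<tau> > 2\<tau> - 1\<close>: every removed
  edge lies in a 4-cycle (a rectangle) of the heavy graph of utilities above \<open>2\<tau> - 1\<close>. Two
  distinct rectangles through a common vertex span one of five bipartite patterns with \<open>v\<close>
  vertices and more than \<open>v\<close> edges. An edge is heavy with probability \<open>O(log n / n)\<close>, so a
  union bound shows that with high probability none of these patterns occurs. Then every
  vertex lies in at most one heavy rectangle, and at most two of its edges are removed.\<close>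

section \<open>The removal step\<close>

lemma sum_top_image_mset_set:
  fixes S :: "'a::linorder set"
  assumes "finite S"
  shows "sum_top r (image_mset v (mset_set S)) =
         sum_list (map v (take r (rev (sort_key v (sorted_list_of_set S)))))"
proof -
  have mset_eq: "image_mset v (mset_set S) = mset (map v (sorted_list_of_set S))"
    using assms by (metis mset_map mset_set_set distinct_sorted_list_of_set set_sorted_list_of_set)
  have sort_map: "sort (map v xs) = map v (sort_key v xs)" for xs :: "'a list"
    by (rule properties_for_sort) (simp_all add: mset_map)
  show ?thesis
    unfolding sum_top_def by (simp only: mset_eq sorted_list_of_multiset_mset sort_map rev_map take_map)
qed

lemma sum_top_image_mset_set_eq_sum:
  fixes S :: "'a::linorder set"
  assumes "finite S"
  obtains T where "T \<subseteq> S" "card T = min r (card S)"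
    "sum_top r (image_mset v (mset_set S)) = sum v T"
proof
  let ?ys = "take r (rev (sort_key v (sorted_list_of_set S)))"
  have "distinct ?ys" by simp
  then show "card (set ?ys) = min r (card S)"
    by (simp add: distinct_card length_sorted_list_of_set)
  show "set ?ys \<subseteq> S"
    using assms by (auto dest: in_set_takeD)
  show "sum_top r (image_mset v (mset_set S)) = sum v (set ?ys)"
    using assms \<open>distinct ?ys\<close> by (simp add: sum_top_image_mset_set sum_list_distinct_conv_sum_set)
qed

lemma sum_top_2_gt_obtains_pair:
  fixes S :: "'a::linorder set"
  assumes "finite S" "\<forall>j\<in>S. v j \<le> 1" "1 \<le> c" "c < sum_top 2 (image_mset v (mset_set S))"
  obtains a b where "a \<in> S" "b \<in> S" "a \<noteq> b" "c < v a + v b"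
proof -
  obtain T where T: "T \<subseteq> S" "card T = min 2 (card S)"
    "sum_top 2 (image_mset v (mset_set S)) = sum v T"
    using sum_top_image_mset_set_eq_sum[OF assms(1)] .
  have "card T = 2"
  proof (rule ccontr)
    assume "card T \<noteq> 2"
    with T(2) have "card T \<le> 1" by linarith
    moreover have "sum v T \<le> card T"
      using sum_bounded_above[of T v 1] assms(2) T(1) by auto
    ultimately have "sum v T \<le> 1" by linarith
    with T(3) assms(3,4) show False by linarith
  qed
  then obtain a b where "T = {a, b}" "a \<noteq> b" by (auto simp: card_2_iff)
  with T assms(4) that show thesis by auto
qed

lemma shrink_subset: "shrink k v r \<tau> S \<subseteq> S"
  by (induction k arbitrary: S) auto

lemma removed_by_shrink_imp_heavy_pair:
  assumes "finite S" "\<forall>j\<in>S. v j \<le> 1" "1/2 \<le> \<tau>" "j \<in> S" "j \<notin> shrink k v 2 \<tau> S"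
  shows "\<exists>j'\<in>S. j' \<noteq> j \<and> 2*\<tau> - 1 < v j \<and> 2*\<tau> - 1 < v j'"
  using assms
proof (induction k arbitrary: S)
  case 0
  then show ?case by simp
next
  case (Suc k)
  let ?S' = "S - {j\<in>S. v j = Max (v ` S)}"
  show ?case
  proof (cases "S \<noteq> {} \<and> 2 * \<tau> < sum_top 2 (image_mset v (mset_set S))")
    case loop: True
    show ?thesis
    proof (cases "j \<in> ?S'")
      case True
      with Suc.prems loop Suc.IH[of ?S'] show ?thesis by auto
    next
      case False
      with Suc.prems have j_max: "v j = Max (v ` S)" by auto
      obtain a b where ab: "a \<in> S" "b \<in> S" "a \<noteq> b" "2 * \<tau> < v a + v b"
        using sum_top_2_gt_obtains_pair[of S v "2 * \<tau>"] Suc.prems loop by auto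
      with Suc.prems(2) have "2*\<tau> - 1 < v a" "2*\<tau> - 1 < v b" by force+
      moreover have "v a \<le> v j" "v b \<le> v j"
        using j_max ab Suc.prems(1) by simp_all
      ultimately show ?thesis using ab by (metis less_le_trans)
    qed
  next
    case False
    with Suc.prems show ?thesis by simp
  qed
qed

lemma not_in_foldl_shrink_imp_removed:
  assumes "j \<in> S0" "j \<notin> foldl (\<lambda>S i'. if i' = i then S else shrink (card S) (u i') r \<tau> S) S0 l"
  shows "\<exists>i'\<in>set l. i' \<noteq> i \<and> (\<exists>S \<subseteq> S0. j \<in> S \<and> j \<notin> shrink (card S) (u i') r \<tau> S)"
  using assms
proof (induction l arbitrary: S0)
  case Nil
  then show ?case by simp
next
  case (Cons i' l)
  let ?S1 = "if i' = i then S0 else shrink (card S0) (u i') r \<tau> S0"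
  have "?S1 \<subseteq> S0" using shrink_subset by auto
  show ?case
  proof (cases "j \<in> ?S1")
    case True
    with Cons.IH[of ?S1] Cons.prems \<open>?S1 \<subseteq> S0\<close> show ?thesis by force
  next
    case False
    with Cons.prems(1) show ?thesis by (auto split: if_splits)
  qed
qed

definition heavy_edges :: "nat \<Rightarrow> nat \<Rightarrow> (nat \<Rightarrow> nat \<Rightarrow> real) \<Rightarrow> real \<Rightarrow> (nat \<times> nat) set" where
  "heavy_edges n m u c = {(i, j). i < n \<and> j < m \<and> c < u i j}"

definition rectangle :: "(nat \<times> nat) set \<Rightarrow> nat \<Rightarrow> nat \<Rightarrow> nat \<Rightarrow> nat \<Rightarrow> bool" where
  "rectangle H i i' j j' \<longleftrightarrow> i \<noteq> i' \<and> j \<noteq> j' \<and> {i, i'} \<times> {j, j'} \<subseteq> H"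

lemma removed_edge_in_heavy_rectangle:
  assumes "1/2 \<le> \<tau>" "\<tau> < 1" "\<forall>i<n. \<forall>j<m. u i j \<le> 1"
    and "(i, j) \<in> Ethr n m u \<tau> - Estar n m u 2 \<tau>"
  shows "\<exists>i' j'. rectangle (heavy_edges n m u (2*\<tau> - 1)) i i' j j'"
proof -
  define S0 where "S0 = {j. j < m \<and> \<tau> \<le> u i j}"
  have ij: "i < n" "j \<in> S0" "j \<notin> Mstar n m u 2 \<tau> i"
    using assms(4) by (auto simp: Ethr_def Estar_def S0_def)
  then obtain i' S where i': "i' < n" "i' \<noteq> i" "S \<subseteq> S0" "j \<in> S"
      "j \<notin> shrink (card S) (u i') 2 \<tau> S"
    using not_in_foldl_shrink_imp_removed[of j S0] unfolding Mstar_def S0_def by fastforce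
  have "finite S" using i'(3) by (rule finite_subset) (simp add: S0_def)
  moreover have "\<forall>j\<in>S. u i' j \<le> 1" using i'(1,3) assms(3) unfolding S0_def by auto
  ultimately obtain j' where "j' \<in> S" "j' \<noteq> j" "2*\<tau> - 1 < u i' j" "2*\<tau> - 1 < u i' j'"
    using removed_by_shrink_imp_heavy_pair[of S "u i'" \<tau> j] assms(1) i'(4,5) by blast
  \<comment> \<open>\<open>j'\<close> is a candidate item of \<open>i\<close> too, so \<open>u i j' \<ge> \<tau> > 2\<tau> - 1\<close>.\<close>
  with i' ij assms(2) show ?thesis
    unfolding rectangle_def heavy_edges_def S0_def by (intro exI[of _ i'] exI[of _ j']) auto
qed

section \<open>Forbidden patterns\<close>

type_synonym pattern = "nat \<times> nat \<times> (nat \<times> nat) list"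

definition distinct_lists :: "nat \<Rightarrow> nat \<Rightarrow> nat list set" where
  "distinct_lists k n = {xs. length xs = k \<and> distinct xs \<and> set xs \<subseteq> {..<n}}"

definition placement :: "(nat \<times> nat) list \<Rightarrow> nat list \<Rightarrow> nat list \<Rightarrow> (nat \<times> nat) set" where
  "placement P ags its = (\<lambda>(k, l). (ags ! k, its ! l)) ` set P"

text \<open>A pattern \<open>(a, b, P)\<close> is a bipartite graph with agent vertices \<open>0..<a\<close>, item vertices
  \<open>0..<b\<close> and edge list \<open>P\<close>; it occurs in \<open>H\<close> if some injective placement of its vertices
  among the agents \<open><n\<close> and items \<open><m\<close> maps all its edges into \<open>H\<close>.\<close>

fun occurs :: "pattern \<Rightarrow> nat \<Rightarrow> nat \<Rightarrow> (nat \<times> nat) set \<Rightarrow> bool" where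
  "occurs (a, b, P) n m H \<longleftrightarrow>
     (\<exists>ags\<in>distinct_lists a n. \<exists>its\<in>distinct_lists b m. placement P ags its \<subseteq> H)"

text \<open>The unions of two distinct rectangles through a common vertex: \<open>K\<^sub>2\<^sub>,\<^sub>3\<close>, \<open>K\<^sub>3\<^sub>,\<^sub>2\<close>,
  and two rectangles sharing an agent and an item, only an agent, or only an item.\<close>

definition pattern_K23 :: pattern where
  "pattern_K23 = (2, 3, [(0,0), (0,1), (0,2), (1,0), (1,1), (1,2)])"

definition pattern_K32 :: pattern where
  "pattern_K32 = (3, 2, [(0,0), (0,1), (1,0), (1,1), (2,0), (2,1)])"

definition pattern_rectangles_share_edge :: pattern where
  "pattern_rectangles_share_edge = (3, 3, [(0,0), (0,1), (1,0), (1,1), (0,2), (2,0), (2,2)])"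

definition pattern_rectangles_share_agent :: pattern where
  "pattern_rectangles_share_agent = (3, 4, [(0,0), (0,1), (1,0), (1,1), (0,2), (0,3), (2,2), (2,3)])"

definition pattern_rectangles_share_item :: pattern where
  "pattern_rectangles_share_item = (4, 3, [(0,0), (0,1), (1,0), (1,1), (2,0), (2,2), (3,0), (3,2)])"

definition bad_patterns :: "pattern set" where
  "bad_patterns = {pattern_K23, pattern_K32, pattern_rectangles_share_edge,
     pattern_rectangles_share_agent, pattern_rectangles_share_item}"

lemma bad_patterns_sparse:
  assumes "(a, b, P) \<in> bad_patterns"
  shows "a + b < card (set P)" "\<forall>(k, l)\<in>set P. k < a \<and> l < b"
  using assms by (auto simp: bad_patterns_def pattern_K23_def pattern_K32_def
      pattern_rectangles_share_edge_def pattern_rectangles_share_agent_def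
      pattern_rectangles_share_item_def)

lemma finite_bad_patterns: "finite bad_patterns"
  by (simp add: bad_patterns_def)

lemma occursI:
  assumes "ags \<in> distinct_lists a n" "its \<in> distinct_lists b m" "placement P ags its \<subseteq> H"
  shows "occurs (a, b, P) n m H"
  using assms by auto

lemma occurs_mono: "occurs pat n m H \<Longrightarrow> H \<subseteq> H' \<Longrightarrow> occurs pat n m H'"
  by (cases pat) auto

lemma occurs_single_edge: "occurs (1, 1, [(0, 0)]) n m H \<longleftrightarrow> (\<exists>i<n. \<exists>j<m. (i, j) \<in> H)"
proof
  assume "occurs (1, 1, [(0, 0)]) n m H"
  then obtain i j where "[i] \<in> distinct_lists 1 n" "[j] \<in> distinct_lists 1 m" "(i, j) \<in> H"
    by (auto simp: distinct_lists_def placement_def length_Suc_conv)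
  then show "\<exists>i<n. \<exists>j<m. (i, j) \<in> H" by (auto simp: distinct_lists_def)
next
  assume "\<exists>i<n. \<exists>j<m. (i, j) \<in> H"
  then obtain i j where "i < n" "j < m" "(i, j) \<in> H" by blast
  then show "occurs (1, 1, [(0, 0)]) n m H"
    by (intro occursI[of "[i]" _ _ "[j]"]) (auto simp: distinct_lists_def placement_def)
qed

lemma occurs_K23:
  assumes "{a, b} \<times> {x, y, z} \<subseteq> H" "H \<subseteq> {..<n} \<times> {..<m}" "a \<noteq> b" "distinct [x, y, z]"
  shows "occurs pattern_K23 n m H"
  unfolding pattern_K23_def
  by (rule occursI[of "[a, b]" _ _ "[x, y, z]"]) (use assms in \<open>auto simp: distinct_lists_def placement_def\<close>)

lemma occurs_K32:
  assumes "{a, b, c} \<times> {x, y} \<subseteq> H" "H \<subseteq> {..<n} \<times> {..<m}" "distinct [a, b, c]" "x \<noteq> y"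
  shows "occurs pattern_K32 n m H"
  unfolding pattern_K32_def
  by (rule occursI[of "[a, b, c]" _ _ "[x, y]"]) (use assms in \<open>auto simp: distinct_lists_def placement_def\<close>)

lemma occurs_rectangles_share_edge:
  assumes "{s, t} \<times> {u, v} \<subseteq> H" "{s, t'} \<times> {u, v'} \<subseteq> H" "H \<subseteq> {..<n} \<times> {..<m}"
    "distinct [s, t, t']" "distinct [u, v, v']"
  shows "occurs pattern_rectangles_share_edge n m H"
  unfolding pattern_rectangles_share_edge_def
  by (rule occursI[of "[s, t, t']" _ _ "[u, v, v']"])
    (use assms in \<open>auto simp: distinct_lists_def placement_def\<close>)

lemma occurs_rectangles_share_agent:
  assumes "{s, t} \<times> {x, y} \<subseteq> H" "{s, t'} \<times> {x', y'} \<subseteq> H" "H \<subseteq> {..<n} \<times> {..<m}"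
    "distinct [s, t, t']" "distinct [x, y, x', y']"
  shows "occurs pattern_rectangles_share_agent n m H"
  unfolding pattern_rectangles_share_agent_def
  by (rule occursI[of "[s, t, t']" _ _ "[x, y, x', y']"])
    (use assms in \<open>auto simp: distinct_lists_def placement_def\<close>)

lemma occurs_rectangles_share_item:
  assumes "{a, b} \<times> {u, v} \<subseteq> H" "{a', b'} \<times> {u, v'} \<subseteq> H" "H \<subseteq> {..<n} \<times> {..<m}"
    "distinct [a, b, a', b']" "distinct [u, v, v']"
  shows "occurs pattern_rectangles_share_item n m H"
  unfolding pattern_rectangles_share_item_def
  by (rule occursI[of "[a, b, a', b']" _ _ "[u, v, v']"])
    (use assms in \<open>auto simp: distinct_lists_def placement_def\<close>)

lemma doubletons_meeting:
  assumes "a \<noteq> b" "a' \<noteq> b'" "{a, b} \<noteq> {a', b'}" "{a, b} \<inter> {a', b'} \<noteq> {}"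
  obtains s t t' where "{a, b} = {s, t}" "{a', b'} = {s, t'}" "distinct [s, t, t']"
  using assms by (cases "a = a'"; cases "a = b'"; cases "b = a'"; cases "b = b'") (auto; blast)+

lemma meeting_rectangles_cases:
  assumes ne: "a \<noteq> b" "a' \<noteq> b'" "x \<noteq> y" "x' \<noteq> y'"
    and meet: "{a, b} \<inter> {a', b'} \<noteq> {} \<or> {x, y} \<inter> {x', y'} \<noteq> {}"
    and differ: "{a, b} \<noteq> {a', b'} \<or> {x, y} \<noteq> {x', y'}"
  obtains (same_agents) z where "{a, b} = {a', b'}" "z \<in> {x', y'}" "z \<notin> {x, y}"
  | (same_items) c where "{x, y} = {x', y'}" "c \<in> {a', b'}" "c \<notin> {a, b}"
  | (share_edge) s t t' u v v' where "{a, b} = {s, t}" "{a', b'} = {s, t'}" "distinct [s, t, t']"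
      "{x, y} = {u, v}" "{x', y'} = {u, v'}" "distinct [u, v, v']"
  | (share_agent) s t t' where "{a, b} = {s, t}" "{a', b'} = {s, t'}" "distinct [s, t, t']"
      "{x, y} \<inter> {x', y'} = {}"
  | (share_item) u v v' where "{a, b} \<inter> {a', b'} = {}"
      "{x, y} = {u, v}" "{x', y'} = {u, v'}" "distinct [u, v, v']"
proof (cases "{a, b} = {a', b'}")
  case agents: True
  with differ have "{x, y} \<noteq> {x', y'}" by blast
  with ne(4) have "x' \<notin> {x, y} \<or> y' \<notin> {x, y}" by (auto simp: doubleton_eq_iff)
  then obtain z where "z \<in> {x', y'}" "z \<notin> {x, y}" by blast
  with agents show thesis by (rule that(1))
next
  case agents: False
  show thesis
  proof (cases "{x, y} = {x', y'}")
    case items: True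
    from agents ne(2) have "a' \<notin> {a, b} \<or> b' \<notin> {a, b}" by (auto simp: doubleton_eq_iff)
    then obtain c where "c \<in> {a', b'}" "c \<notin> {a, b}" by blast
    with items show thesis by (rule that(2))
  next
    case items: False
    show thesis
    proof (cases "{a, b} \<inter> {a', b'} = {}")
      case True
      with meet have "{x, y} \<inter> {x', y'} \<noteq> {}" by blast
      with True show thesis
        by (elim doubletons_meeting[OF ne(3,4) items]) (rule that(5))
    next
      case False
      then obtain s t t' where st: "{a, b} = {s, t}" "{a', b'} = {s, t'}" "distinct [s, t, t']"
        by (elim doubletons_meeting[OF ne(1,2) agents])
      show thesis
      proof (cases "{x, y} \<inter> {x', y'} = {}")
        case True
        with st show thesis by (rule that(4))
      next
        case False
        with st show thesis
          by (elim doubletons_meeting[OF ne(3,4) items]) (rule that(3))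
      qed
    qed
  qed
qed

definition rectangles_separated :: "(nat \<times> nat) set \<Rightarrow> bool" where
  "rectangles_separated H \<longleftrightarrow> (\<forall>a b x y a' b' x' y'.
     rectangle H a b x y \<longrightarrow> rectangle H a' b' x' y' \<longrightarrow>
     {a, b} \<inter> {a', b'} \<noteq> {} \<or> {x, y} \<inter> {x', y'} \<noteq> {} \<longrightarrow>
     {a, b} = {a', b'} \<and> {x, y} = {x', y'})"

lemma meeting_rectangles_occurs_bad_pattern:
  assumes R: "rectangle H a b x y" and R': "rectangle H a' b' x' y'"
    and meet: "{a, b} \<inter> {a', b'} \<noteq> {} \<or> {x, y} \<inter> {x', y'} \<noteq> {}"
    and differ: "{a, b} \<noteq> {a', b'} \<or> {x, y} \<noteq> {x', y'}"
    and H: "H \<subseteq> {..<n} \<times> {..<m}"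
  shows "\<exists>pat\<in>bad_patterns. occurs pat n m H"
proof -
  have ne: "a \<noteq> b" "a' \<noteq> b'" "x \<noteq> y" "x' \<noteq> y'"
    and sq: "{a, b} \<times> {x, y} \<subseteq> H" and sq': "{a', b'} \<times> {x', y'} \<subseteq> H"
    using R R' by (auto simp: rectangle_def)
  show ?thesis
  proof (cases rule: meeting_rectangles_cases[OF ne meet differ,
        case_names same_agents same_items share_edge share_agent share_item])
    case (same_agents z)
    have "{a, b} \<times> {x, y, z} \<subseteq> H"
      using sq sq'[folded same_agents(1)] same_agents(2) by blast
    then have "occurs pattern_K23 n m H"
      by (rule occurs_K23[OF _ H]) (use ne same_agents(3) in auto)
    then show ?thesis by (auto simp: bad_patterns_def)
  next
    case (same_items c)
    have "{a, b, c} \<times> {x, y} \<subseteq> H"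
      using sq sq'[folded same_items(1)] same_items(2) by blast
    then have "occurs pattern_K32 n m H"
      by (rule occurs_K32[OF _ H]) (use ne same_items(3) in auto)
    then show ?thesis by (auto simp: bad_patterns_def)
  next
    case (share_edge s t t' u v v')
    from sq[unfolded share_edge(1,4)] sq'[unfolded share_edge(2,5)] H share_edge(3,6)
    have "occurs pattern_rectangles_share_edge n m H"
      by (rule occurs_rectangles_share_edge)
    then show ?thesis by (auto simp: bad_patterns_def)
  next
    case (share_agent s t t')
    have "distinct [x, y, x', y']" using ne share_agent(4) by auto
    with sq[unfolded share_agent(1)] sq'[unfolded share_agent(2)] H share_agent(3)
    have "occurs pattern_rectangles_share_agent n m H"
      by (rule occurs_rectangles_share_agent)
    then show ?thesis by (auto simp: bad_patterns_def)
  next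
    case (share_item u v v')
    have "distinct [a, b, a', b']" using ne share_item(1) by auto
    from sq[unfolded share_item(2)] sq'[unfolded share_item(3)] H this share_item(4)
    have "occurs pattern_rectangles_share_item n m H"
      by (rule occurs_rectangles_share_item)
    then show ?thesis by (auto simp: bad_patterns_def)
  qed
qed

lemma rectangles_separated_if_no_bad_pattern:
  assumes "H \<subseteq> {..<n} \<times> {..<m}" "\<forall>pat\<in>bad_patterns. \<not> occurs pat n m H"
  shows "rectangles_separated H"
  unfolding rectangles_separated_def
  using meeting_rectangles_occurs_bad_pattern[OF _ _ _ _ assms(1)] assms(2) by blast

lemma card_subset_doubleton_le_2: "A \<subseteq> {x, y} \<Longrightarrow> card A \<le> 2"
  using card_mono[of "{x, y}" A] card_insert_le_m1[of 2 "{y}" x] by fastforce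

lemma card_row_le_2:
  assumes sep: "rectangles_separated H" and rect: "\<And>j. (i, j) \<in> E \<Longrightarrow> \<exists>i' j'. rectangle H i i' j j'"
  shows "card {j. j < m \<and> (i, j) \<in> E} \<le> 2"
proof (cases "\<exists>j. (i, j) \<in> E")
  case True
  then obtain j0 i0 j0' where R0: "rectangle H i i0 j0 j0'" using rect by blast
  have "j \<in> {j0, j0'}" if "(i, j) \<in> E" for j
  proof -
    from rect[OF that] obtain i' j' where "rectangle H i i' j j'" by blast
    with R0 sep have "{j, j'} = {j0, j0'}" unfolding rectangles_separated_def by blast
    then show ?thesis by blast
  qed
  then show ?thesis by (intro card_subset_doubleton_le_2) blast
next
  case False
  then show ?thesis by (intro card_subset_doubleton_le_2[of _ 0 0]) blast
qed

lemma card_column_le_2: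
  assumes sep: "rectangles_separated H" and rect: "\<And>i. (i, j) \<in> E \<Longrightarrow> \<exists>i' j'. rectangle H i i' j j'"
  shows "card {i. i < n \<and> (i, j) \<in> E} \<le> 2"
proof (cases "\<exists>i. (i, j) \<in> E")
  case True
  then obtain i0 i0' j0 where R0: "rectangle H i0 i0' j j0" using rect by blast
  have "i \<in> {i0, i0'}" if "(i, j) \<in> E" for i
  proof -
    from rect[OF that] obtain i' j' where "rectangle H i i' j j'" by blast
    with R0 sep have "{i, i'} = {i0, i0'}" unfolding rectangles_separated_def by blast
    then show ?thesis by blast
  qed
  then show ?thesis by (intro card_subset_doubleton_le_2) blast
next
  case False
  then show ?thesis by (intro card_subset_doubleton_le_2[of _ 0 0]) blast
qed

lemma max_degree_removed_le_2:
  assumes "1/2 \<le> \<tau>" "\<tau> < 1" "\<forall>i<n. \<forall>j<m. u i j \<le> 1"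
    and no_bad: "\<forall>pat\<in>bad_patterns. \<not> occurs pat n m {(i, j). 2*\<tau> - 1 < u i j}"
  shows "max_degree_le n m (Ethr n m u \<tau> - Estar n m u 2 \<tau>) 2"
proof -
  have "heavy_edges n m u (2*\<tau> - 1) \<subseteq> {(i, j). 2*\<tau> - 1 < u i j}"
    and box: "heavy_edges n m u (2*\<tau> - 1) \<subseteq> {..<n} \<times> {..<m}"
    by (auto simp: heavy_edges_def)
  with no_bad have "\<forall>pat\<in>bad_patterns. \<not> occurs pat n m (heavy_edges n m u (2*\<tau> - 1))"
    using occurs_mono by blast
  note sep = rectangles_separated_if_no_bad_pattern[OF box this]
  note rect = removed_edge_in_heavy_rectangle[OF assms(1-3)]
  show ?thesis
    unfolding max_degree_le_def using card_row_le_2[OF sep rect] card_column_le_2[OF sep rect] by blast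
qed

section \<open>Measurability of the algorithm\<close>

lemma measurable_finite_set_valued:
  assumes "finite A" "\<And>\<omega>. \<omega> \<in> space M \<Longrightarrow> g \<omega> \<subseteq> A"
    and "\<And>a. a \<in> A \<Longrightarrow> {\<omega>\<in>space M. a \<in> g \<omega>} \<in> sets M"
  shows "g \<in> M \<rightarrow>\<^sub>M count_space UNIV"
proof -
  have "g -` {T} \<inter> space M = {\<omega>\<in>space M. \<forall>a\<in>A. a \<in> g \<omega> \<longleftrightarrow> a \<in> T}" if "T \<subseteq> A" for T
    using assms(2) that by blast
  moreover have "{\<omega>\<in>space M. \<forall>a\<in>A. a \<in> g \<omega> \<longleftrightarrow> a \<in> T} \<in> sets M" for T
    using assms(1,3) unfolding pred_def[symmetric] by measurable
  ultimately have "g \<in> M \<rightarrow>\<^sub>M count_space (Pow A)"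
    using assms(1,2) by (subst measurable_count_space_eq_countable) (auto intro: countable_finite)
  from this measurable_count_space[of "\<lambda>T. T"] show ?thesis
    by (rule measurable_compose)
qed

lemma measurable_compose_finite_set_valued:
  assumes g: "g \<in> M \<rightarrow>\<^sub>M count_space UNIV" "\<And>\<omega>. \<omega> \<in> space M \<Longrightarrow> g \<omega> \<subseteq> A" "finite A"
    and h: "\<And>T. T \<subseteq> A \<Longrightarrow> (\<lambda>\<omega>. h T \<omega>) \<in> M \<rightarrow>\<^sub>M N"
  shows "(\<lambda>\<omega>. h (g \<omega>) \<omega>) \<in> M \<rightarrow>\<^sub>M N"
proof (rule measurable_compose_countable'[where I = "Pow A"])
  show "g \<in> M \<rightarrow>\<^sub>M count_space (Pow A)"
    using g measurable_sets[OF g(1), of "{T}" for T]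
    by (subst measurable_count_space_eq_countable) (auto intro: countable_finite)
qed (use g h in \<open>auto intro: countable_finite\<close>)

lemma measurable_insort_key:
  assumes "\<And>j. (\<lambda>\<omega>. v \<omega> j :: real) \<in> borel_measurable M"
  shows "(\<lambda>\<omega>. insort_key (v \<omega>) x ys) \<in> M \<rightarrow>\<^sub>M count_space UNIV"
proof (induction ys)
  case (Cons y ys)
  have "(\<lambda>\<omega>. y # insort_key (v \<omega>) x ys) \<in> M \<rightarrow>\<^sub>M count_space UNIV"
    using measurable_compose[OF Cons.IH measurable_count_space[of "Cons y"]] by simp
  moreover have "{\<omega>\<in>space M. v \<omega> x \<le> v \<omega> y} \<in> sets M"
    using assms by measurable
  ultimately show ?case
    unfolding insort_key.simps by (intro measurable_If) auto
qed simp

lemma measurable_sort_key: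
  fixes xs :: "'a::countable list"
  assumes "\<And>j. (\<lambda>\<omega>. v \<omega> j :: real) \<in> borel_measurable M"
  shows "(\<lambda>\<omega>. sort_key (v \<omega>) xs) \<in> M \<rightarrow>\<^sub>M count_space UNIV"
proof (induction xs)
  case (Cons x xs)
  show ?case
    using measurable_compose_countable[where f = "\<lambda>ys \<omega>. insort_key (v \<omega>) x ys",
        OF measurable_insort_key[OF assms] Cons.IH] by simp
qed simp

lemma measurable_sum_top:
  fixes S :: "'a::{countable, linorder} set"
  assumes "\<And>j. (\<lambda>\<omega>. v \<omega> j :: real) \<in> borel_measurable M" "finite S"
  shows "(\<lambda>\<omega>. sum_top r (image_mset (v \<omega>) (mset_set S))) \<in> borel_measurable M"
proof -
  have "(\<lambda>\<omega>. sum_list (map (v \<omega>) ys)) \<in> borel_measurable M" for ys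
    using assms(1) by (induction ys) simp_all
  then have "(\<lambda>\<omega>. sum_list (map (v \<omega>) (take r (rev (sort_key (v \<omega>) (sorted_list_of_set S))))))
      \<in> borel_measurable M"
    using measurable_compose_countable[where f = "\<lambda>ys \<omega>. sum_list (map (v \<omega>) (take r (rev ys)))",
        OF _ measurable_sort_key[OF assms(1)]] by simp
  then show ?thesis
    using sum_top_image_mset_set[OF assms(2)] by simp
qed

lemma measurable_shrink:
  assumes v: "\<And>j. (\<lambda>\<omega>. v \<omega> j :: real) \<in> borel_measurable M" and "finite S"
  shows "(\<lambda>\<omega>. shrink k (v \<omega>) r \<tau> S) \<in> M \<rightarrow>\<^sub>M count_space UNIV"
  using \<open>finite S\<close>
proof (induction k arbitrary: S)
  case (Suc k)
  let ?rest = "\<lambda>\<omega>. S - {j\<in>S. v \<omega> j = Max (v \<omega> ` S)}"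
  have "(\<lambda>\<omega>. Max ((\<lambda>j. v \<omega> j) ` S)) \<in> borel_measurable M"
    using Suc.prems v by (rule borel_measurable_Max)
  then have "{\<omega>\<in>space M. a \<in> ?rest \<omega>} \<in> sets M" if "a \<in> S" for a
    using v that by simp
  then have "?rest \<in> M \<rightarrow>\<^sub>M count_space UNIV"
    using Suc.prems by (intro measurable_finite_set_valued[of S]) auto
  then have rest: "(\<lambda>\<omega>. shrink k (v \<omega>) r \<tau> (?rest \<omega>)) \<in> M \<rightarrow>\<^sub>M count_space UNIV"
  proof (rule measurable_compose_finite_set_valued[where h = "\<lambda>T \<omega>. shrink k (v \<omega>) r \<tau> T"])
    fix T assume "T \<subseteq> S"
    with Suc.prems show "(\<lambda>\<omega>. shrink k (v \<omega>) r \<tau> T) \<in> M \<rightarrow>\<^sub>M count_space UNIV"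
      by (intro Suc.IH) (rule finite_subset)
  qed (use Suc.prems in auto)
  have "{\<omega>\<in>space M. S \<noteq> {} \<and> real r * \<tau> < sum_top r (image_mset (v \<omega>) (mset_set S))} \<in> sets M"
    using measurable_sum_top[OF v Suc.prems] by measurable
  from rest measurable_count_space_const this show ?case
    unfolding shrink.simps by (rule measurable_If)
qed simp

lemma measurable_Mstar:
  assumes u: "\<And>i j. (\<lambda>\<omega>. u \<omega> i j :: real) \<in> borel_measurable M"
  shows "(\<lambda>\<omega>. Mstar n m (u \<omega>) r \<tau> i) \<in> M \<rightarrow>\<^sub>M count_space UNIV"
proof -
  have fold: "(\<lambda>\<omega>. foldl (\<lambda>S i'. if i' = i then S else shrink (card S) (u \<omega> i') r \<tau> S) (S0 \<omega>) l)
      \<in> M \<rightarrow>\<^sub>M count_space UNIV"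
    if "S0 \<in> M \<rightarrow>\<^sub>M count_space UNIV" "\<And>\<omega>. \<omega> \<in> space M \<Longrightarrow> S0 \<omega> \<subseteq> {..<m}" for S0 l
    using that
  proof (induction l arbitrary: S0)
    case (Cons i' l)
    let ?step = "\<lambda>T \<omega>. if i' = i then T else shrink (card T) (u \<omega> i') r \<tau> T"
    have "(\<lambda>\<omega>. ?step (S0 \<omega>) \<omega>) \<in> M \<rightarrow>\<^sub>M count_space UNIV"
    proof (rule measurable_compose_finite_set_valued[where h = ?step])
      fix T :: "nat set" assume "T \<subseteq> {..<m}"
      then have "finite T" by (rule finite_subset) simp
      then show "(\<lambda>\<omega>. ?step T \<omega>) \<in> M \<rightarrow>\<^sub>M count_space UNIV"
        using measurable_shrink[of "\<lambda>\<omega>. u \<omega> i'" M T] u by simp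
    qed (use Cons.prems in auto)
    moreover have "?step (S0 \<omega>) \<omega> \<subseteq> {..<m}" if "\<omega> \<in> space M" for \<omega>
      using Cons.prems(2)[OF that] shrink_subset[of "card (S0 \<omega>)" "u \<omega> i'" r \<tau> "S0 \<omega>"] by auto
    ultimately show ?case
      using Cons.IH[of "\<lambda>\<omega>. ?step (S0 \<omega>) \<omega>"] by simp
  qed simp
  have "(\<lambda>\<omega>. {j. j < m \<and> \<tau> \<le> u \<omega> i j}) \<in> M \<rightarrow>\<^sub>M count_space UNIV"
    using u by (intro measurable_finite_set_valued[of "{..<m}"]) auto
  then show ?thesis
    unfolding Mstar_def by (rule fold) auto
qed

lemma sets_max_degree_removed:
  assumes u: "\<And>i j. (\<lambda>\<omega>. u \<omega> i j :: real) \<in> borel_measurable M"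
  shows "{\<omega>\<in>space M. max_degree_le n m (Ethr n m (u \<omega>) \<tau> - Estar n m (u \<omega>) r \<tau>) d} \<in> sets M"
proof -
  have removed: "{\<omega>\<in>space M. (i, j) \<in> Ethr n m (u \<omega>) \<tau> - Estar n m (u \<omega>) r \<tau>} \<in> sets M" for i j
  proof -
    have "{\<omega>\<in>space M. j \<in> Mstar n m (u \<omega>) r \<tau> i} \<in> sets M"
      using measurable_sets[OF measurable_Mstar[where u = u, OF u], of "{S. j \<in> S}"]
      by (simp add: vimage_def Int_def conj_commute)
    moreover have "{\<omega>\<in>space M. \<tau> \<le> u \<omega> i j} \<in> sets M"
      using u by measurable
    moreover have "{\<omega>\<in>space M. (i, j) \<in> Ethr n m (u \<omega>) \<tau> - Estar n m (u \<omega>) r \<tau>} =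
        (if i < n \<and> j < m then {\<omega>\<in>space M. \<tau> \<le> u \<omega> i j} - {\<omega>\<in>space M. j \<in> Mstar n m (u \<omega>) r \<tau> i}
         else {})"
      by (auto simp: Ethr_def Estar_def)
    ultimately show ?thesis by (simp add: sets.Diff)
  qed
  have "(\<lambda>\<omega>. Ethr n m (u \<omega>) \<tau> - Estar n m (u \<omega>) r \<tau>) \<in> M \<rightarrow>\<^sub>M count_space UNIV"
  proof (rule measurable_finite_set_valued[of "{..<n} \<times> {..<m}"])
    show "{\<omega>\<in>space M. p \<in> Ethr n m (u \<omega>) \<tau> - Estar n m (u \<omega>) r \<tau>} \<in> sets M" for p
      using removed[of "fst p" "snd p"] by simp
  qed (auto simp: Ethr_def)
  from measurable_compose[OF this measurable_count_space] show ?thesis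
    unfolding pred_def[symmetric] .
qed

lemma borel_measurable_PiM_coordinate:
  fixes U :: "real measure"
  assumes "sets U = sets borel"
  shows "(\<lambda>\<omega>. \<omega> p) \<in> borel_measurable (PiM I (\<lambda>_. U))"
proof (cases "p \<in> I")
  case True
  then show ?thesis
    using measurable_component_singleton[of p I "\<lambda>_. U"] measurable_cong_sets[OF refl assms] by blast
next
  case False
  then have "\<omega> p = undefined" if "\<omega> \<in> space (PiM I (\<lambda>_. U))" for \<omega>
    using that by (auto simp: space_PiM PiE_def extensional_def)
  then show ?thesis
    by (subst measurable_cong[where g = "\<lambda>_. undefined"]) simp_all
qed

section \<open>Probability of the patterns\<close>

lemma PiM_all_greater:
  fixes U :: "real measure"
  assumes U: "prob_space U" "sets U = sets borel" and F: "finite F" "F \<subseteq> I"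
  shows "{\<omega>\<in>space (PiM I (\<lambda>_. U)). \<forall>p\<in>F. c < \<omega> p} \<in> sets (PiM I (\<lambda>_. U))"
    and "measure (PiM I (\<lambda>_. U)) {\<omega>\<in>space (PiM I (\<lambda>_. U)). \<forall>p\<in>F. c < \<omega> p} =
         measure U {x. c < x} ^ card F"
proof -
  interpret prob_space U by (rule U(1))
  have "space U = UNIV" using sets_eq_imp_space_eq[OF U(2)] by simp
  with F(2) have eq: "{\<omega>\<in>space (PiM I (\<lambda>_. U)). \<forall>p\<in>F. c < \<omega> p} =
      prod_emb I (\<lambda>_. U) F (PiE F (\<lambda>_. {x. c < x}))"
    by (auto simp: prod_emb_def space_PiM PiE_def Pi_def)
  have c: "{x. c < x} \<in> sets U" using U(2) by simp
  show "{\<omega>\<in>space (PiM I (\<lambda>_. U)). \<forall>p\<in>F. c < \<omega> p} \<in> sets (PiM I (\<lambda>_. U))"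
    unfolding eq using F c by (intro sets_PiM_I_finite measurable_prod_emb) auto
  have "emeasure (PiM I (\<lambda>_. U)) (prod_emb I (\<lambda>_. U) F (PiE F (\<lambda>_. {x. c < x}))) =
        (\<Prod>i\<in>F. emeasure U {x. c < x})"
    by (rule emeasure_PiM_emb) (use U F c in auto)
  also have "\<dots> = ennreal (measure U {x. c < x} ^ card F)"
    by (simp add: emeasure_eq_measure prod_ennreal ennreal_power)
  finally show "measure (PiM I (\<lambda>_. U)) {\<omega>\<in>space (PiM I (\<lambda>_. U)). \<forall>p\<in>F. c < \<omega> p} =
      measure U {x. c < x} ^ card F"
    unfolding eq measure_def by simp
qed

lemma finite_distinct_lists: "finite (distinct_lists k n)"
  and card_distinct_lists_le: "card (distinct_lists k n) \<le> n ^ k"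
proof -
  have sub: "distinct_lists k n \<subseteq> {xs. set xs \<subseteq> {..<n} \<and> length xs = k}"
    by (auto simp: distinct_lists_def)
  then show "finite (distinct_lists k n)"
    by (rule finite_subset) (simp add: finite_lists_length_eq)
  from card_mono[OF _ sub] show "card (distinct_lists k n) \<le> n ^ k"
    by (simp add: finite_lists_length_eq card_lists_length_eq)
qed

lemma card_placement:
  assumes "distinct ags" "distinct its" "\<forall>(k, l)\<in>set P. k < length ags \<and> l < length its"
  shows "card (placement P ags its) = card (set P)"
  unfolding placement_def
proof (rule card_image, rule inj_onI, clarify)
  fix k l k' l' assume "(k, l) \<in> set P" "(k', l') \<in> set P" "ags ! k = ags ! k'" "its ! l = its ! l'"
  moreover from assms(3) \<open>(k, l) \<in> set P\<close> \<open>(k', l') \<in> set P\<close>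
  have "k < length ags" "k' < length ags" "l < length its" "l' < length its" by auto
  ultimately show "k = k' \<and> l = l'" using assms(1,2) by (simp add: nth_eq_iff_index_eq)
qed

lemma placement_subset:
  assumes "\<forall>(k, l)\<in>set P. k < length ags \<and> l < length its"
  shows "placement P ags its \<subseteq> set ags \<times> set its"
  using assms by (auto simp: placement_def)

lemma placement_distinct_lists:
  assumes "ags \<in> distinct_lists a n" "its \<in> distinct_lists b m" "\<forall>(k, l)\<in>set P. k < a \<and> l < b"
  shows "placement P ags its \<subseteq> {..<n} \<times> {..<m}" "card (placement P ags its) = card (set P)"
proof -
  from assms have lists: "distinct ags" "distinct its" "set ags \<subseteq> {..<n}" "set its \<subseteq> {..<m}"
      "\<forall>(k, l)\<in>set P. k < length ags \<and> l < length its"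
    by (auto simp: distinct_lists_def)
  show "placement P ags its \<subseteq> {..<n} \<times> {..<m}"
    using placement_subset[OF lists(5)] lists(3,4) by blast
  show "card (placement P ags its) = card (set P)"
    using card_placement[OF lists(1,2,5)] .
qed

lemma occurs_event:
  fixes U :: "real measure" and n m :: nat
  assumes U: "prob_space U" "sets U = sets borel" and P: "\<forall>(k, l)\<in>set P. k < a \<and> l < b"
  defines "M \<equiv> PiM ({..<n} \<times> {..<m}) (\<lambda>_. U)"
  shows "{\<omega>\<in>space M. occurs (a, b, P) n m {p. c < \<omega> p}} \<in> sets M"
    and "measure M {\<omega>\<in>space M. occurs (a, b, P) n m {p. c < \<omega> p}}
           \<le> real n ^ a * real m ^ b * measure U {x. c < x} ^ card (set P)"
proof -
  let ?L = "distinct_lists a n \<times> distinct_lists b m"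
  let ?A = "\<lambda>(ags, its). {\<omega>\<in>space M. \<forall>p\<in>placement P ags its. c < \<omega> p}"
  have event: "{\<omega>\<in>space M. occurs (a, b, P) n m {p. c < \<omega> p}} = (\<Union>x\<in>?L. ?A x)"
    by auto
  have fin: "finite ?L" by (simp add: finite_distinct_lists)
  have A: "?A x \<in> sets M" "measure M (?A x) = measure U {x. c < x} ^ card (set P)" if xL: "x \<in> ?L" for x
  proof -
    obtain ags its where x: "x = (ags, its)" "(ags, its) \<in> ?L" using xL by (cases x) auto
    then have placed: "placement P ags its \<subseteq> {..<n} \<times> {..<m}" "card (placement P ags its) = card (set P)"
      using placement_distinct_lists[OF _ _ P] by auto
    have "finite (placement P ags its)" by (simp add: placement_def)
    note all_greater = PiM_all_greater[OF U this placed(1), of c]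
    show "?A x \<in> sets M" "measure M (?A x) = measure U {x. c < x} ^ card (set P)"
      unfolding x M_def using all_greater placed(2) by simp_all
  qed
  show "{\<omega>\<in>space M. occurs (a, b, P) n m {p. c < \<omega> p}} \<in> sets M"
    unfolding event using fin A by auto
  have "measure M (\<Union>x\<in>?L. ?A x) \<le> (\<Sum>x\<in>?L. measure M (?A x))"
    using fin A by (intro measure_UNION_le) auto
  also have "\<dots> = real (card ?L) * measure U {x. c < x} ^ card (set P)"
    using A by simp
  also have "\<dots> \<le> real n ^ a * real m ^ b * measure U {x. c < x} ^ card (set P)"
  proof (rule mult_right_mono)
    have "card ?L \<le> n ^ a * m ^ b"
      by (simp add: card_cartesian_product card_distinct_lists_le mult_le_mono)
    then show "real (card ?L) \<le> real n ^ a * real m ^ b"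
      by (metis of_nat_le_iff of_nat_mult of_nat_power)
  qed simp
  finally show "measure M {\<omega>\<in>space M. occurs (a, b, P) n m {p. c < \<omega> p}}
      \<le> real n ^ a * real m ^ b * measure U {x. c < x} ^ card (set P)"
    unfolding event .
qed

lemma PiM_some_greater_null:
  fixes U :: "real measure" and n m :: nat
  assumes U: "prob_space U" "sets U = sets borel" "measure U {x. c < x} = 0"
  defines "M \<equiv> PiM ({..<n} \<times> {..<m}) (\<lambda>_. U)"
  shows "{\<omega>\<in>space M. \<exists>i<n. \<exists>j<m. c < \<omega> (i, j)} \<in> sets M"
    and "measure M {\<omega>\<in>space M. \<exists>i<n. \<exists>j<m. c < \<omega> (i, j)} = 0"
proof -
  have "\<forall>(k, l)\<in>set [(0::nat, 0::nat)]. k < 1 \<and> l < 1" by simp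
  note single = occurs_event[OF U(1,2) this, where n = n and m = m and c = c,
      unfolded occurs_single_edge mem_Collect_eq M_def[symmetric]]
  show "{\<omega>\<in>space M. \<exists>i<n. \<exists>j<m. c < \<omega> (i, j)} \<in> sets M"
    by (rule single(1))
  have "measure M {\<omega>\<in>space M. \<exists>i<n. \<exists>j<m. c < \<omega> (i, j)} \<le> 0"
    using single(2) U(3) by simp
  then show "measure M {\<omega>\<in>space M. \<exists>i<n. \<exists>j<m. c < \<omega> (i, j)} = 0"
    using measure_nonneg[of M] by (rule antisym)
qed

definition pattern_bound :: "nat \<Rightarrow> nat \<Rightarrow> real \<Rightarrow> real" where
  "pattern_bound n m p = (\<Sum>(a, b, P)\<in>bad_patterns. real n ^ a * real m ^ b * p ^ card (set P))"

lemma prob_max_degree_removed_le_2: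
  fixes U :: "real measure" and n m :: nat
  assumes U: "prob_space U" "sets U = sets borel" "measure U {x. 1 < x} = 0"
    and \<tau>: "1/2 \<le> \<tau>" "\<tau> < 1"
  defines "M \<equiv> PiM ({..<n} \<times> {..<m}) (\<lambda>_. U)"
  shows "1 - pattern_bound n m (measure U {x. 2*\<tau> - 1 < x}) \<le>
    measure M {\<omega>\<in>space M. max_degree_le n m (Ethr n m (\<lambda>i j. \<omega> (i, j)) \<tau> - Estar n m (\<lambda>i j. \<omega> (i, j)) 2 \<tau>) 2}"
    (is "_ \<le> measure M ?G")
proof -
  interpret M: prob_space M
    unfolding M_def by (rule prob_space_PiM) (use U(1) in auto)
  let ?over = "{\<omega>\<in>space M. \<exists>i<n. \<exists>j<m. 1 < \<omega> (i, j)}"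
  let ?bad = "\<lambda>pat. {\<omega>\<in>space M. occurs pat n m {p. 2*\<tau> - 1 < \<omega> p}}"
  note over = PiM_some_greater_null[OF U(1-3), where n = n and m = m, folded M_def]
  have bad: "?bad pat \<in> sets M"
    "measure M (?bad pat) \<le> (case pat of (a, b, P) \<Rightarrow> real n ^ a * real m ^ b * measure U {x. 2*\<tau> - 1 < x} ^ card (set P))"
    if "pat \<in> bad_patterns" for pat
    using that occurs_event[OF U(1,2) bad_patterns_sparse(2)] unfolding M_def by (cases pat; auto)+
  have "?G \<in> sets M"
    unfolding M_def
    by (rule sets_max_degree_removed) (rule borel_measurable_PiM_coordinate[OF U(2)])
  have cover: "space M - ?G \<subseteq> ?over \<union> (\<Union>pat\<in>bad_patterns. ?bad pat)"
  proof
    fix \<omega> assume \<omega>: "\<omega> \<in> space M - ?G"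
    show "\<omega> \<in> ?over \<union> (\<Union>pat\<in>bad_patterns. ?bad pat)"
    proof (rule ccontr)
      assume "\<omega> \<notin> ?over \<union> (\<Union>pat\<in>bad_patterns. ?bad pat)"
      with \<omega> have "\<forall>i<n. \<forall>j<m. \<omega> (i, j) \<le> 1"
        and "\<forall>pat\<in>bad_patterns. \<not> occurs pat n m {p. 2*\<tau> - 1 < \<omega> p}"
        by (auto intro: leI simp del: occurs.simps)
      moreover have "{(i, j). 2*\<tau> - 1 < \<omega> (i, j)} = {p. 2*\<tau> - 1 < \<omega> p}" by auto
      ultimately show False
        using max_degree_removed_le_2[OF \<tau>, where u = "\<lambda>i j. \<omega> (i, j)"] \<omega> by simp
    qed
  qed
  have bad_union: "(\<Union>pat\<in>bad_patterns. ?bad pat) \<in> sets M"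
    using bad(1) by (intro sets.finite_UN finite_bad_patterns)
  have "measure M (space M - ?G) \<le> measure M (?over \<union> (\<Union>pat\<in>bad_patterns. ?bad pat))"
    by (rule M.finite_measure_mono[OF cover sets.Un[OF over(1) bad_union]])
  also have "\<dots> \<le> measure M ?over + measure M (\<Union>pat\<in>bad_patterns. ?bad pat)"
    using over(1) bad_union by (rule measure_Un_le)
  also have "\<dots> \<le> pattern_bound n m (measure U {x. 2*\<tau> - 1 < x})"
  proof -
    have "measure M (\<Union>pat\<in>bad_patterns. ?bad pat) \<le> (\<Sum>pat\<in>bad_patterns. measure M (?bad pat))"
      using bad finite_bad_patterns by (intro measure_UNION_le) auto
    also have "\<dots> \<le> pattern_bound n m (measure U {x. 2*\<tau> - 1 < x})"
      unfolding pattern_bound_def using bad by (intro sum_mono) auto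
    finally show ?thesis using over(2) by simp
  qed
  finally show ?thesis
    using M.prob_compl[OF \<open>?G \<in> sets M\<close>] by simp
qed

section \<open>Asymptotics\<close>

lemma polylog_power_tendsto_0:
  assumes "a + b < e"
  shows "(\<lambda>n::nat. real n ^ a * real (2 * n) ^ b * (K * (ln (2 * real n) / real n)) ^ e) \<longlonglongrightarrow> 0"
proof -
  obtain d where e: "e = a + b + Suc d"
    using assms by (metis add_Suc_right less_iff_Suc_add)
  have "(\<lambda>n::nat. real n ^ a * (2 * real n) ^ b * (ln (2 * real n) / real n) ^ (a + b + Suc d)) \<longlonglongrightarrow> 0"
    by real_asymp
  then have lim: "(\<lambda>n::nat. K ^ e * (real n ^ a * (2 * real n) ^ b * (ln (2 * real n) / real n) ^ e)) \<longlonglongrightarrow> 0"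
    unfolding e by (rule tendsto_mult_right_zero)
  have eq: "real n ^ a * real (2 * n) ^ b * (K * (ln (2 * real n) / real n)) ^ e =
      K ^ e * (real n ^ a * (2 * real n) ^ b * (ln (2 * real n) / real n) ^ e)" for n
    by (simp only: power_mult_distrib[of K] of_nat_mult of_nat_numeral mult_ac)
  show ?thesis
    unfolding eq using lim .
qed

lemma pattern_bound_tendsto_0:
  assumes "\<forall>\<^sub>F n in sequentially. 0 \<le> p n \<and> p n \<le> K * (ln (2 * real n) / real n)"
  shows "(\<lambda>n. pattern_bound n (2 * n) (p n)) \<longlonglongrightarrow> 0"
  unfolding pattern_bound_def
proof (rule tendsto_null_sum, clarify)
  fix a b P assume "(a, b, P) \<in> bad_patterns"
  let ?e = "card (set P)"
  show "(\<lambda>n. real n ^ a * real (2 * n) ^ b * p n ^ ?e) \<longlonglongrightarrow> 0"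
  proof (rule tendsto_sandwich[OF _ _ tendsto_const polylog_power_tendsto_0])
    show "\<forall>\<^sub>F n in sequentially. 0 \<le> real n ^ a * real (2 * n) ^ b * p n ^ ?e"
      using assms by eventually_elim simp
    show "\<forall>\<^sub>F n in sequentially. real n ^ a * real (2 * n) ^ b * p n ^ ?e
        \<le> real n ^ a * real (2 * n) ^ b * (K * (ln (2 * real n) / real n)) ^ ?e"
      using assms by eventually_elim (intro mult_left_mono power_mono; simp)
    show "a + b < ?e"
      using bad_patterns_sparse(1)[OF \<open>(a, b, P) \<in> bad_patterns\<close>] .
  qed
qed

lemma tau_eventually_bounds:
  assumes "\<theta>l > 0" "q > 0" "poly_bounded_above U \<theta>u q"
  shows "\<forall>\<^sub>F n in sequentially. 1/2 \<le> tau \<theta>l q n (2*n) \<and> tau \<theta>l q n (2*n) < 1 \<and>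
    measure U {x. 2 * tau \<theta>l q n (2*n) - 1 < x} \<le> \<theta>u * 2 powr q * 64 / \<theta>l * (ln (2 * real n) / real n)"
proof -
  define B where "B n = 64 / \<theta>l * (ln (2 * real n) / real n)" for n :: nat
  define \<alpha> where "\<alpha> n = B n powr (1/q)" for n
  have tau: "tau \<theta>l q n (2*n) = 1 - \<alpha> n" for n
    by (simp add: tau_def \<alpha>_def B_def field_simps)
  have "(\<lambda>n::nat. ln (2 * real n) / real n) \<longlonglongrightarrow> 0"
    by real_asymp
  then have "B \<longlonglongrightarrow> 0"
    unfolding B_def[abs_def] by (rule tendsto_mult_right_zero)
  moreover have "\<forall>\<^sub>F n in sequentially. 0 \<le> B n"
    using eventually_ge_at_top[of 1] by eventually_elim (use assms(1) in \<open>simp add: B_def\<close>)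
  ultimately have "\<alpha> \<longlonglongrightarrow> 0"
    unfolding \<alpha>_def[abs_def] by (rule tendsto_zero_powrI[OF _ tendsto_const]) (use assms(2) in auto)
  then have "\<forall>\<^sub>F n in sequentially. \<alpha> n < 1/4"
    by (rule order_tendstoD) simp
  with eventually_ge_at_top[of 1] show ?thesis
  proof eventually_elim
    case (elim n)
    then have B: "0 < B n" using assms(1) by (simp add: B_def)
    then have \<alpha>: "0 < \<alpha> n" by (simp add: \<alpha>_def)
    have "measure U {x. 1 - 2 * \<alpha> n < x} \<le> \<theta>u * (2 * \<alpha> n) powr q"
      using assms(3) \<alpha> elim(2) by (auto simp: poly_bounded_above_def)
    also have "(2 * \<alpha> n) powr q = 2 powr q * B n"
      using B assms(2) by (simp add: \<alpha>_def powr_mult powr_powr)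
    finally show ?case
      unfolding tau using \<alpha> elim(2) by (simp add: B_def algebra_simps)
  qed
qed

lemma prob_greater_1_eq_0:
  fixes U :: "real measure"
  assumes "prob_space U" "sets U = sets borel" "measure U {0..1} = 1"
  shows "measure U {x. 1 < x} = 0"
proof -
  interpret prob_space U by fact
  have "measure U {x. 1 < x} \<le> measure U (space U - {0..1})"
    using assms(2) sets_eq_imp_space_eq[OF assms(2)] by (intro finite_measure_mono) auto
  also have "\<dots> = 0"
    using assms(2,3) by (subst prob_compl) auto
  finally show ?thesis
    using measure_nonneg[of U "{x. 1 < x}"] by linarith
qed

theorem proposition5:
  fixes U :: "real measure" and \<theta>l \<theta>u q :: real
  assumes "prob_space U" and "sets U = sets borel"
    and "measure U {0..1} = 1"
    and "\<theta>l > 0" and "\<theta>u > 0" and "q > 0"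
    and "poly_bounded_below U \<theta>l q" and "poly_bounded_above U \<theta>u q"
  shows "(\<lambda>n. measure (PiM ({..<n} \<times> {..<2*n}) (\<lambda>_. U))
            {\<omega> \<in> space (PiM ({..<n} \<times> {..<2*n}) (\<lambda>_. U)).
               max_degree_le n (2*n)
                 (Ethr n (2*n) (\<lambda>i j. \<omega> (i, j)) (tau \<theta>l q n (2*n))
                  - Estar n (2*n) (\<lambda>i j. \<omega> (i, j)) 2 (tau \<theta>l q n (2*n))) 2})
         \<longlonglongrightarrow> 1"
  (is "?f \<longlonglongrightarrow> 1")
proof -
  \<comment> \<open>The lower bound on \<open>U\<close> only motivates the choice of \<open>\<tau>\<close>; the argument needs the upper one.\<close>
  let ?p = "\<lambda>n. measure U {x. 2 * tau \<theta>l q n (2*n) - 1 < x}"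
  note tau = tau_eventually_bounds[OF assms(4,6,8)]
  note null = prob_greater_1_eq_0[OF assms(1-3)]
  from tau have lower: "\<forall>\<^sub>F n in sequentially. 1 - pattern_bound n (2*n) (?p n) \<le> ?f n"
    by eventually_elim (intro prob_max_degree_removed_le_2[OF assms(1,2) null]; simp)
  have lim: "(\<lambda>n. 1 - pattern_bound n (2*n) (?p n)) \<longlonglongrightarrow> 1"
  proof -
    from tau have "\<forall>\<^sub>F n in sequentially. 0 \<le> ?p n \<and> ?p n \<le> \<theta>u * 2 powr q * 64 / \<theta>l * (ln (2 * real n) / real n)"
      by eventually_elim simp
    from tendsto_diff[OF tendsto_const pattern_bound_tendsto_0[OF this]] show ?thesis
      by simp
  qed
  have upper: "\<forall>\<^sub>F n in sequentially. ?f n \<le> 1"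
    using assms(1) by (intro always_eventually allI prob_space.prob_le_1 prob_space_PiM) auto
  show ?thesis
    using lower upper lim tendsto_const by (rule tendsto_sandwich)
qed

end
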